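(* Let $H,K$ be $n$-Hilbert spaces, fix $a_2,\dots,a_n\in H$, $b_2,\dots,b_n\in K$, $C_1\in\mathcal{GB}(H_F)$, $C_2\in\mathcal{GB}(K_G)$. Let $\{f_i\}_{i=1}^\infty,\{e_i\}_{i=1}^\infty$ be a pair of dual $C_1$-controlled frames associated to $(a_2,\dots,a_n)$ for $H$ and $\{g_j\}_{j=1}^\infty,\{h_j\}_{j=1}^\infty$ a pair of dual $C_2$-controlled frames associated to $(b_2,\dots,b_n)$ for $K$. Then $\{e_i\otimes h_j\}_{i,j=1}^\infty$ is a dual $(C_1\otimes C_2)$-controlled frame associated to $(a_2\otimes b_2,\dots,a_n\otimes b_n)$ for $H\otimes K$ of $\{f_i\otimes g_j\}_{i,j=1}^\infty$.
   Context: Let $n\ge2$. For a complex $n$-Hilbert space $H$ with $n$-inner product $\langle\cdot,\cdot|\cdot,\dots,\cdot\rangle_1$ and $n$-norm $\|x_1,\dots,x_n\|_1=\langle x_1,x_1|x_2,\dots,x_n\rangle_1^{1/2}$, and fixed $a_2,\dots,a_n\in H$, $F=\{a_2,\dots,a_n\}$: $\langle x,y\rangle_F=\langle x,y|a_2,\dots,a_n\rangle_1$ is a semi-inner product on $H$ inducing an inner product on $H/L_F$ ($L_F=\mathrm{span}\,F$); identifying $H/L_F$ with an algebraic complement of $L_F$, $H_F$ is its Hilbert completion, with norm written $\|f,a_2,\dots,a_n\|_1$. Likewise $K$ with $\langle\cdot,\cdot|\cdot,\dots,\cdot\rangle_2$, $G=\{b_2,\dots,b_n\}$, Hilbert space $K_G$.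 $H\otimes K$ carries the $n$-inner product $\langle f_1\otimes g_1,f_2\otimes g_2|f_3\otimes g_3,\dots,f_n\otimes g_n\rangle=\langle f_1,f_2|f_3,\dots,f_n\rangle_1\langle g_1,g_2|g_3,\dots,g_n\rangle_2$ and $n$-norm $\|f_1\otimes g_1,\dots,f_n\otimes g_n\|=\|f_1,\dots,f_n\|_1\|g_1,\dots,g_n\|_2$; $H_F\otimes K_G$ is the Hilbert tensor product and $(Q\otimes T)(f\otimes g)=Qf\otimes Tg$. $\mathcal{GB}(\cdot)$: bounded operators with bounded inverse. For $C\in\mathcal{GB}(H_F)$, $\{f_i\}\subseteq H$ is a $C$-controlled frame associated to $(a_2,\dots,a_n)$ for $H$ if there are $0<A\le B<\infty$ with $A\|f,a_2,\dots,a_n\|_1^2\le\sum_i\langle f,f_i|a_2,\dots,a_n\rangle_1\langle Cf_i,f|a_2,\dots,a_n\rangle_1\le B\|f,a_2,\dots,a_n\|_1^2$ for all $f\in H_F$; a $C$-controlled frame $\{e_i\}$ associated to $(a_2,\dots,a_n)$ is a dual of $\{f_i\}$ (and they form a pair of dual $C$-controlled frames) if $f=\sum_i\langle f,e_i|a_2,\dots,a_n\rangle_1Cf_i$ for all $f\in H_F$ (similarly for $K$). A family $\{\phi_{ij}\}\subseteq H\otimes K$ is a $(C_1\otimes C_2)$-controlled frame associated to $(a_2\otimes b_2,\dots,a_n\otimes b_n)$ if there are $0<A\le B<\infty$ with $A\|f\otimes g,a_2\otimes b_2,\dots\|^2\le\sum_{i,j}\langle f\otimes g,\phi_{ij}|a_2\otimes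 b_2,\dots,a_n\otimes b_n\rangle\langle(C_1\otimes C_2)\phi_{ij},f\otimes g|a_2\otimes b_2,\dots,a_n\otimes b_n\rangle\le B\|f\otimes g,a_2\otimes b_2,\dots\|^2$ for all $f\in H_F$, $g\in K_G$. A $(C_1\otimes C_2)$-controlled frame $\{e_i\otimes h_j\}$ is a dual of the $(C_1\otimes C_2)$-controlled frame $\{f_i\otimes g_j\}$ if $f\otimes g=\sum_{i,j}\langle f\otimes g,e_i\otimes h_j|a_2\otimes b_2,\dots,a_n\otimes b_n\rangle(C_1\otimes C_2)(f_i\otimes g_j)$ for all $f\in H_F$, $g\in K_G$. *)

theory Defs
  imports Complex_Main "HOL-Library.Multiset"
begin

text \<open>A finite list of vectors is linearly dependent (repetitions count).\<close>
definition list_dependent :: "(complex \<Rightarrow> 'a \<Rightarrow> 'a) \<Rightarrow> 'a::ab_group_add list \<Rightarrow> bool" where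
  "list_dependent sc xs \<longleftrightarrow>
     (\<exists>cs. length cs = length xs \<and> (\<exists>c\<in>set cs. c \<noteq> 0) \<and>
           sum_list (map2 sc cs xs) = 0)"

definition bilinear_map ::
  "(complex \<Rightarrow> 'a \<Rightarrow> 'a) \<Rightarrow> (complex \<Rightarrow> 'b \<Rightarrow> 'b) \<Rightarrow> (complex \<Rightarrow> 'c \<Rightarrow> 'c)
   \<Rightarrow> ('a::ab_group_add \<Rightarrow> 'b::ab_group_add \<Rightarrow> 'c::ab_group_add) \<Rightarrow> bool" where
  "bilinear_map sa sb sc t \<longleftrightarrow>
     (\<forall>y. Vector_Spaces.linear sa sc (\<lambda>x. t x y)) \<and> (\<forall>x. Vector_Spaces.linear sb sc (\<lambda>y. t x y))"

text \<open>The algebraic tensor product of complex vector spaces, characterised up to isomorphism: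
  the elementary tensors span, and every bilinear form factors through a linear functional.\<close>
definition alg_tensor ::
  "(complex \<Rightarrow> 'a \<Rightarrow> 'a) \<Rightarrow> (complex \<Rightarrow> 'b \<Rightarrow> 'b) \<Rightarrow> (complex \<Rightarrow> 'c \<Rightarrow> 'c)
   \<Rightarrow> ('a::ab_group_add \<Rightarrow> 'b::ab_group_add \<Rightarrow> 'c::ab_group_add) \<Rightarrow> bool" where
  "alg_tensor sa sb sc t \<longleftrightarrow>
     vector_space sa \<and> vector_space sb \<and> vector_space sc \<and> bilinear_map sa sb sc t \<and>
     (\<forall>z. \<exists>xs ys. length xs = length ys \<and> z = sum_list (map2 t xs ys)) \<and>
     (\<forall>\<beta>. bilinear_map sa sb (*) \<beta> \<longrightarrow>
        (\<exists>\<phi>. Vector_Spaces.linear sc (*) \<phi> \<and> (\<forall>x y. \<phi> (t x y) = \<beta> x y)))"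

text \<open>\<open>ip x y zs\<close> stands for \<open>\<langle>x,y|z\<^sub>2,\<dots>,z\<^sub>n\<rangle>\<close>, where \<open>zs = [z\<^sub>2,\<dots>,z\<^sub>n]\<close> has length n-1.\<close>
definition n_inner_product ::
  "(complex \<Rightarrow> 'a \<Rightarrow> 'a) \<Rightarrow> nat \<Rightarrow> ('a::ab_group_add \<Rightarrow> 'a \<Rightarrow> 'a list \<Rightarrow> complex) \<Rightarrow> bool" where
  "n_inner_product sc n ip \<longleftrightarrow> vector_space sc \<and>
     (\<forall>x zs. length zs = n - 1 \<longrightarrow>
        Im (ip x x zs) = 0 \<and> Re (ip x x zs) \<ge> 0 \<and>
        (ip x x zs = 0 \<longleftrightarrow> list_dependent sc (x # zs))) \<and>
     (\<forall>x zs ws. length zs = n - 1 \<longrightarrow> mset ws = mset (x # zs) \<longrightarrow>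
        ip (hd ws) (hd ws) (tl ws) = ip x x zs) \<and>
     (\<forall>x y zs. length zs = n - 1 \<longrightarrow> ip x y zs = cnj (ip y x zs)) \<and>
     (\<forall>c x y zs. length zs = n - 1 \<longrightarrow> ip (sc c x) y zs = c * ip x y zs) \<and>
     (\<forall>x x' y zs. length zs = n - 1 \<longrightarrow> ip (x + x') y zs = ip x y zs + ip x' y zs)"

definition n_norm :: "('a \<Rightarrow> 'a \<Rightarrow> 'a list \<Rightarrow> complex) \<Rightarrow> 'a \<Rightarrow> 'a list \<Rightarrow> real" where
  "n_norm ip x zs = sqrt (Re (ip x x zs))"

definition n_hilbert ::
  "(complex \<Rightarrow> 'a \<Rightarrow> 'a) \<Rightarrow> nat \<Rightarrow> ('a::ab_group_add \<Rightarrow> 'a \<Rightarrow> 'a list \<Rightarrow> complex) \<Rightarrow> bool" where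
  "n_hilbert sc n ip \<longleftrightarrow> n_inner_product sc n ip \<and>
     (\<forall>u::nat \<Rightarrow> 'a.
        (\<forall>zs. length zs = n - 1 \<longrightarrow>
           (\<forall>e>0. \<exists>N. \<forall>k\<ge>N. \<forall>l\<ge>N. n_norm ip (u k - u l) zs < e))
        \<longrightarrow> (\<exists>x. \<forall>zs. length zs = n - 1 \<longrightarrow> (\<lambda>k. n_norm ip (u k - x) zs) \<longlonglongrightarrow> 0))"

definition hnorm :: "('h \<Rightarrow> 'h \<Rightarrow> complex) \<Rightarrow> 'h \<Rightarrow> real" where
  "hnorm inn x = sqrt (Re (inn x x))"

definition hconv :: "('h::ab_group_add \<Rightarrow> 'h \<Rightarrow> complex) \<Rightarrow> (nat \<Rightarrow> 'h) \<Rightarrow> 'h \<Rightarrow> bool" where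
  "hconv inn u x \<longleftrightarrow> (\<lambda>k. hnorm inn (u k - x)) \<longlonglongrightarrow> 0"

definition hsums :: "('h::ab_group_add \<Rightarrow> 'h \<Rightarrow> complex) \<Rightarrow> (nat \<Rightarrow> 'h) \<Rightarrow> 'h \<Rightarrow> bool" where
  "hsums inn u x \<longleftrightarrow> hconv inn (\<lambda>N. \<Sum>i<N. u i) x"

definition complex_hilbert :: "(complex \<Rightarrow> 'h \<Rightarrow> 'h) \<Rightarrow> ('h::ab_group_add \<Rightarrow> 'h \<Rightarrow> complex) \<Rightarrow> bool" where
  "complex_hilbert sc inn \<longleftrightarrow> vector_space sc \<and>
     (\<forall>x y z. inn (x + y) z = inn x z + inn y z) \<and>
     (\<forall>c x y. inn (sc c x) y = c * inn x y) \<and>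
     (\<forall>x y. inn y x = cnj (inn x y)) \<and>
     (\<forall>x. Im (inn x x) = 0 \<and> Re (inn x x) \<ge> 0) \<and>
     (\<forall>x. inn x x = 0 \<longrightarrow> x = 0) \<and>
     (\<forall>u::nat \<Rightarrow> 'h. (\<forall>e>0. \<exists>N. \<forall>k\<ge>N. \<forall>l\<ge>N. hnorm inn (u k - u l) < e)
        \<longrightarrow> (\<exists>x. hconv inn u x))"

definition bounded_op ::
  "(complex \<Rightarrow> 'h \<Rightarrow> 'h) \<Rightarrow> ('h::ab_group_add \<Rightarrow> 'h \<Rightarrow> complex) \<Rightarrow> ('h \<Rightarrow> 'h) \<Rightarrow> bool" where
  "bounded_op sc inn T \<longleftrightarrow> Vector_Spaces.linear sc sc T \<and> (\<exists>K. \<forall>x. hnorm inn (T x) \<le> K * hnorm inn x)"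

definition GB :: "(complex \<Rightarrow> 'h \<Rightarrow> 'h) \<Rightarrow> ('h::ab_group_add \<Rightarrow> 'h \<Rightarrow> complex) \<Rightarrow> ('h \<Rightarrow> 'h) \<Rightarrow> bool" where
  "GB sc inn T \<longleftrightarrow> bounded_op sc inn T \<and>
     (\<exists>S. bounded_op sc inn S \<and> (\<forall>x. S (T x) = x) \<and> (\<forall>y. T (S y) = y))"

text \<open>\<open>(sch, innF)\<close> together with the canonical map \<open>j : H \<rightarrow> H\<^sub>F\<close> is the Hilbert completion
  of \<open>H\<close> with the semi-inner product \<open>\<langle>x,y\<rangle>\<^sub>F = \<langle>x,y|a\<^sub>2,\<dots>,a\<^sub>n\<rangle>\<close> (modulo its null space),
  characterised up to unitary isomorphism.\<close>
definition is_HF ::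
  "(complex \<Rightarrow> 'a \<Rightarrow> 'a) \<Rightarrow> ('a::ab_group_add \<Rightarrow> 'a \<Rightarrow> 'a list \<Rightarrow> complex) \<Rightarrow> 'a list
   \<Rightarrow> (complex \<Rightarrow> 'h \<Rightarrow> 'h) \<Rightarrow> ('h::ab_group_add \<Rightarrow> 'h \<Rightarrow> complex) \<Rightarrow> ('a \<Rightarrow> 'h) \<Rightarrow> bool" where
  "is_HF sa ip as sch inn j \<longleftrightarrow> complex_hilbert sch inn \<and> Vector_Spaces.linear sa sch j \<and>
     (\<forall>x y. inn (j x) (j y) = ip x y as) \<and>
     (\<forall>v e. e > 0 \<longrightarrow> (\<exists>x. hnorm inn (j x - v) < e))"

text \<open>Here \<open>\<langle>f,f\<^sub>i|a\<^sub>2,\<dots>,a\<^sub>n\<rangle>\<close> for \<open>f \<in> H\<^sub>F\<close> is \<open>inn f (j f\<^sub>i)\<close>,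
  \<open>C f\<^sub>i\<close> is \<open>C (j f\<^sub>i)\<close> and \<open>\<parallel>f,a\<^sub>2,\<dots>,a\<^sub>n\<parallel>\<close> is \<open>hnorm inn f\<close>.\<close>
definition controlled_frame ::
  "('h::ab_group_add \<Rightarrow> 'h \<Rightarrow> complex) \<Rightarrow> ('a \<Rightarrow> 'h) \<Rightarrow> ('h \<Rightarrow> 'h) \<Rightarrow> (nat \<Rightarrow> 'a) \<Rightarrow> bool" where
  "controlled_frame inn j C f \<longleftrightarrow>
     (\<exists>A B. 0 < A \<and> A \<le> B \<and>
        (\<forall>v. \<exists>s::real.
           (\<lambda>i. inn v (j (f i)) * inn (C (j (f i))) v) sums complex_of_real s \<and>
           A * (hnorm inn v)\<^sup>2 \<le> s \<and> s \<le> B * (hnorm inn v)\<^sup>2))"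

definition dual_controlled_frames ::
  "(complex \<Rightarrow> 'h \<Rightarrow> 'h) \<Rightarrow> ('h::ab_group_add \<Rightarrow> 'h \<Rightarrow> complex) \<Rightarrow> ('a \<Rightarrow> 'h) \<Rightarrow> ('h \<Rightarrow> 'h)
   \<Rightarrow> (nat \<Rightarrow> 'a) \<Rightarrow> (nat \<Rightarrow> 'a) \<Rightarrow> bool" where
  "dual_controlled_frames sch inn j C f e \<longleftrightarrow>
     controlled_frame inn j C f \<and> controlled_frame inn j C e \<and>
     (\<forall>v. hsums inn (\<lambda>i. sch (inn v (j (e i))) (C (j (f i)))) v)"

text \<open>\<open>(scd, innd, tens)\<close> is the Hilbert tensor product \<open>H\<^sub>F \<otimes> K\<^sub>G\<close>, characterised up to
  unitary isomorphism: bilinear, inner product of elementary tensors is the product, and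
  the linear span of the elementary tensors is dense.\<close>
definition hilbert_tensor ::
  "(complex \<Rightarrow> 'h \<Rightarrow> 'h) \<Rightarrow> ('h::ab_group_add \<Rightarrow> 'h \<Rightarrow> complex)
   \<Rightarrow> (complex \<Rightarrow> 'k \<Rightarrow> 'k) \<Rightarrow> ('k::ab_group_add \<Rightarrow> 'k \<Rightarrow> complex)
   \<Rightarrow> (complex \<Rightarrow> 'd \<Rightarrow> 'd) \<Rightarrow> ('d::ab_group_add \<Rightarrow> 'd \<Rightarrow> complex) \<Rightarrow> ('h \<Rightarrow> 'k \<Rightarrow> 'd) \<Rightarrow> bool" where
  "hilbert_tensor sch innh sck innk scd innd tens \<longleftrightarrow>
     complex_hilbert sch innh \<and> complex_hilbert sck innk \<and> complex_hilbert scd innd \<and>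
     bilinear_map sch sck scd tens \<and>
     (\<forall>x y x' y'. innd (tens x y) (tens x' y') = innh x x' * innk y y') \<and>
     (\<forall>v e. e > 0 \<longrightarrow> (\<exists>xs ys. length xs = length ys \<and>
                            hnorm innd (sum_list (map2 tens xs ys) - v) < e))"

definition dsums :: "(nat \<Rightarrow> nat \<Rightarrow> complex) \<Rightarrow> complex \<Rightarrow> bool" where
  "dsums t s \<longleftrightarrow> (\<exists>r. (\<forall>i. (\<lambda>j. t i j) sums r i) \<and> r sums s)"

definition hdsums :: "('d::ab_group_add \<Rightarrow> 'd \<Rightarrow> complex) \<Rightarrow> (nat \<Rightarrow> nat \<Rightarrow> 'd) \<Rightarrow> 'd \<Rightarrow> bool" where
  "hdsums inn t x \<longleftrightarrow> (\<exists>r. (\<forall>i. hsums inn (\<lambda>j. t i j) (r i)) \<and> hsums inn r x)"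

text \<open>\<open>(C\<^sub>1\<otimes>C\<^sub>2)\<close>-controlled frame associated to \<open>(a\<^sub>2\<otimes>b\<^sub>2,\<dots>,a\<^sub>n\<otimes>b\<^sub>n)\<close> for \<open>H\<otimes>K\<close>:
  \<open>\<phi>\<close> is a family in the algebraic tensor product \<open>H\<otimes>K\<close>, \<open>q : H\<otimes>K \<rightarrow> H\<^sub>F\<otimes>K\<^sub>G\<close> the canonical
  map (\<open>q (x\<otimes>y) = j\<^sub>F x \<otimes> j\<^sub>G y\<close>), and \<open>CT = C\<^sub>1 \<otimes> C\<^sub>2\<close> on \<open>H\<^sub>F\<otimes>K\<^sub>G\<close>.
  The condition is required for all elementary tensors \<open>f\<otimes>g\<close>, \<open>f \<in> H\<^sub>F\<close>, \<open>g \<in> K\<^sub>G\<close>.\<close>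
definition tensor_controlled_frame ::
  "('d::ab_group_add \<Rightarrow> 'd \<Rightarrow> complex) \<Rightarrow> ('h \<Rightarrow> 'k \<Rightarrow> 'd) \<Rightarrow> ('c \<Rightarrow> 'd) \<Rightarrow> ('d \<Rightarrow> 'd)
   \<Rightarrow> (nat \<Rightarrow> nat \<Rightarrow> 'c) \<Rightarrow> bool" where
  "tensor_controlled_frame innd tens q CT \<phi> \<longleftrightarrow>
     (\<exists>A B. 0 < A \<and> A \<le> B \<and>
        (\<forall>v w. \<exists>s::real.
           dsums (\<lambda>i j. innd (tens v w) (q (\<phi> i j)) * innd (CT (q (\<phi> i j))) (tens v w))
                 (complex_of_real s) \<and>
           A * (hnorm innd (tens v w))\<^sup>2 \<le> s \<and> s \<le> B * (hnorm innd (tens v w))\<^sup>2))"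

definition tensor_dual_controlled_frames ::
  "(complex \<Rightarrow> 'd \<Rightarrow> 'd) \<Rightarrow> ('d::ab_group_add \<Rightarrow> 'd \<Rightarrow> complex) \<Rightarrow> ('h \<Rightarrow> 'k \<Rightarrow> 'd) \<Rightarrow> ('c \<Rightarrow> 'd)
   \<Rightarrow> ('d \<Rightarrow> 'd) \<Rightarrow> (nat \<Rightarrow> nat \<Rightarrow> 'c) \<Rightarrow> (nat \<Rightarrow> nat \<Rightarrow> 'c) \<Rightarrow> bool" where
  "tensor_dual_controlled_frames scd innd tens q CT \<phi> \<psi> \<longleftrightarrow>
     tensor_controlled_frame innd tens q CT \<phi> \<and> tensor_controlled_frame innd tens q CT \<psi> \<and>
     (\<forall>v w. hdsums innd (\<lambda>i j. scd (innd (tens v w) (q (\<psi> i j))) (CT (q (\<phi> i j)))) (tens v w))"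

end

theory Submission
  imports Defs
begin

text \<open>On an elementary tensor \<open>v \<otimes> w\<close> the double frame series of \<open>{f\<^sub>i \<otimes> g\<^sub>j}\<close> is the
  product of the frame series of \<open>{f\<^sub>i}\<close> at \<open>v\<close> and of \<open>{g\<^sub>j}\<close> at \<open>w\<close>, because inner products of
  elementary tensors multiply and \<open>C\<^sub>1 \<otimes> C\<^sub>2\<close> acts factorwise; hence the frame bounds multiply.
  Likewise the reconstruction series factors: its \<open>(i,j)\<close> term is \<open>x\<^sub>i \<otimes> y\<^sub>j\<close> with
  \<open>x\<^sub>i = \<langle>v,e\<^sub>i\<rangle> C\<^sub>1f\<^sub>i\<close> and \<open>y\<^sub>j = \<langle>w,h\<^sub>j\<rangle> C\<^sub>2g\<^sub>j\<close>. Summing over \<open>j\<close> first gives \<open>x\<^sub>i \<otimes> w\<close> by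
  continuity of \<open>x\<^sub>i \<otimes> -\<close>, and summing these over \<open>i\<close> gives \<open>v \<otimes> w\<close> by continuity of \<open>- \<otimes> w\<close>.\<close>

lemma complex_hilbert_inner_self:
  assumes "complex_hilbert sc inn"
  shows "Im (inn x x) = 0" "0 \<le> Re (inn x x)"
  using assms unfolding complex_hilbert_def by blast+

lemma hnorm_nonneg: "complex_hilbert sc inn \<Longrightarrow> 0 \<le> hnorm inn x"
  unfolding hnorm_def by (simp add: complex_hilbert_inner_self(2))

lemma hsums_bounded_linear_image:
  assumes hilbert: "complex_hilbert s2 inn2"
    and T: "Vector_Spaces.linear s1 s2 T"
    and bound: "\<And>x. hnorm inn2 (T x) \<le> K * hnorm inn1 x"
    and u: "hsums inn1 u x"
  shows "hsums inn2 (\<lambda>i. T (u i)) (T x)"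
proof -
  have hom: "module_hom s1 s2 T" using T by (simp add: linear_iff_module_hom)
  have partial_sum_diff: "(\<Sum>i<N. T (u i)) - T x = T ((\<Sum>i<N. u i) - x)" for N
    by (simp add: module_hom.sum[OF hom] module_hom.diff[OF hom])
  have "(\<lambda>N. K * hnorm inn1 ((\<Sum>i<N. u i) - x)) \<longlonglongrightarrow> 0"
    using u unfolding hsums_def hconv_def by (rule tendsto_mult_right_zero)
  then have "(\<lambda>N. hnorm inn2 (T ((\<Sum>i<N. u i) - x))) \<longlonglongrightarrow> 0"
    by (rule tendsto_sandwich[rotated 2, OF tendsto_const])
       (simp_all add: bound hnorm_nonneg[OF hilbert])
  then show ?thesis
    unfolding hsums_def hconv_def partial_sum_diff .
qed

lemma dsums_mult:
  assumes "a sums s" and "b sums t"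
  shows "dsums (\<lambda>i j. a i * b j) (s * t)"
  unfolding dsums_def
proof (intro exI conjI allI)
  show "(\<lambda>j. a i * b j) sums (a i * t)" for i
    using assms(2) by (rule sums_mult)
  show "(\<lambda>i. a i * t) sums (s * t)"
    using assms(1) by (rule sums_mult2)
qed

lemma mult_mono_bounds:
  fixes A1 B1 A2 B2 x1 x2 s1 s2 :: real
  assumes "0 \<le> A1 * x1" "A1 * x1 \<le> s1" "s1 \<le> B1 * x1"
    and "0 \<le> A2 * x2" "A2 * x2 \<le> s2" "s2 \<le> B2 * x2"
  shows "A1 * A2 * (x1 * x2) \<le> s1 * s2" "s1 * s2 \<le> B1 * B2 * (x1 * x2)"
proof -
  have "(A1 * x1) * (A2 * x2) \<le> s1 * s2"
    using assms by (intro mult_mono) auto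
  then show "A1 * A2 * (x1 * x2) \<le> s1 * s2" by (simp add: mult_ac)
  have "s1 * s2 \<le> (B1 * x1) * (B2 * x2)"
    using assms by (intro mult_mono) auto
  then show "s1 * s2 \<le> B1 * B2 * (x1 * x2)" by (simp add: mult_ac)
qed

context
  fixes sch :: "complex \<Rightarrow> 'h::ab_group_add \<Rightarrow> 'h" and innF :: "'h \<Rightarrow> 'h \<Rightarrow> complex"
    and sck :: "complex \<Rightarrow> 'k::ab_group_add \<Rightarrow> 'k" and innG :: "'k \<Rightarrow> 'k \<Rightarrow> complex"
    and scd :: "complex \<Rightarrow> 'd::ab_group_add \<Rightarrow> 'd" and innd :: "'d \<Rightarrow> 'd \<Rightarrow> complex"
    and tens :: "'h \<Rightarrow> 'k \<Rightarrow> 'd"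
  assumes tensor: "hilbert_tensor sch innF sck innG scd innd tens"
begin

lemma hilbert_tensor_complex_hilbert:
  "complex_hilbert sch innF" "complex_hilbert sck innG" "complex_hilbert scd innd"
  using tensor unfolding hilbert_tensor_def by blast+

lemma hilbert_tensor_inner:
  "innd (tens x y) (tens x' y') = innF x x' * innG y y'"
  using tensor unfolding hilbert_tensor_def by blast

lemma hilbert_tensor_linear_left: "Vector_Spaces.linear sch scd (\<lambda>x. tens x y)"
  and hilbert_tensor_linear_right: "Vector_Spaces.linear sck scd (tens x)"
  using tensor unfolding hilbert_tensor_def bilinear_map_def by blast+

lemma hilbert_tensor_scale:
  "tens (sch c x) (sck d y) = scd (c * d) (tens x y)"
proof -
  have "vector_space scd"
    using hilbert_tensor_complex_hilbert(3) unfolding complex_hilbert_def by blast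
  have "tens (sch c x) (sck d y) = scd c (tens x (sck d y))"
    using hilbert_tensor_linear_left[of "sck d y", unfolded linear_iff_module_hom]
    by (rule module_hom.scale)
  also have "\<dots> = scd c (scd d (tens x y))"
    using hilbert_tensor_linear_right[of x, unfolded linear_iff_module_hom]
    by (simp add: module_hom.scale)
  finally show ?thesis
    using vector_space.vector_space_assms(3)[OF \<open>vector_space scd\<close>] by simp
qed

lemma hnorm_hilbert_tensor:
  "hnorm innd (tens x y) = hnorm innF x * hnorm innG y"
proof -
  have "Im (innF x x) = 0"
    by (rule complex_hilbert_inner_self(1)[OF hilbert_tensor_complex_hilbert(1)])
  then show ?thesis
    by (simp add: hnorm_def hilbert_tensor_inner real_sqrt_mult)
qed

lemma hsums_hilbert_tensor_left:
  "hsums innF u v \<Longrightarrow> hsums innd (\<lambda>i. tens (u i) w) (tens v w)"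
  by (rule hsums_bounded_linear_image[OF hilbert_tensor_complex_hilbert(3)
        hilbert_tensor_linear_left, where K = "hnorm innG w"])
     (simp_all add: hnorm_hilbert_tensor mult.commute)

lemma hsums_hilbert_tensor_right:
  "hsums innG u w \<Longrightarrow> hsums innd (\<lambda>j. tens v (u j)) (tens v w)"
  by (rule hsums_bounded_linear_image[OF hilbert_tensor_complex_hilbert(3)
        hilbert_tensor_linear_right, where K = "hnorm innF v"])
     (simp_all add: hnorm_hilbert_tensor)

end

lemma controlled_frame_tensor:
  assumes tensor: "hilbert_tensor sch innF sck innG scd innd tens"
    and q: "\<forall>x y. q (tHK x y) = tens (jF x) (jG y)"
    and CT: "\<forall>x y. CT (tens x y) = tens (C1 x) (C2 y)"
    and f: "controlled_frame innF jF C1 f" and g: "controlled_frame innG jG C2 g"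
  shows "tensor_controlled_frame innd tens q CT (\<lambda>i j. tHK (f i) (g j))"
proof -
  obtain A1 B1 where A1: "0 < A1" "A1 \<le> B1" and frame1: "\<forall>v. \<exists>s::real.
      (\<lambda>i. innF v (jF (f i)) * innF (C1 (jF (f i))) v) sums complex_of_real s \<and>
      A1 * (hnorm innF v)\<^sup>2 \<le> s \<and> s \<le> B1 * (hnorm innF v)\<^sup>2"
    using f unfolding controlled_frame_def by blast
  obtain A2 B2 where A2: "0 < A2" "A2 \<le> B2" and frame2: "\<forall>w. \<exists>s::real.
      (\<lambda>j. innG w (jG (g j)) * innG (C2 (jG (g j))) w) sums complex_of_real s \<and>
      A2 * (hnorm innG w)\<^sup>2 \<le> s \<and> s \<le> B2 * (hnorm innG w)\<^sup>2"
    using g unfolding controlled_frame_def by blast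
  have "\<exists>s::real. dsums (\<lambda>i j. innd (tens v w) (q (tHK (f i) (g j))) *
          innd (CT (q (tHK (f i) (g j)))) (tens v w)) (complex_of_real s) \<and>
        A1 * A2 * (hnorm innd (tens v w))\<^sup>2 \<le> s \<and> s \<le> B1 * B2 * (hnorm innd (tens v w))\<^sup>2"
    for v w
  proof -
    obtain s1 where s1: "(\<lambda>i. innF v (jF (f i)) * innF (C1 (jF (f i))) v) sums complex_of_real s1"
      "A1 * (hnorm innF v)\<^sup>2 \<le> s1" "s1 \<le> B1 * (hnorm innF v)\<^sup>2"
      using frame1 by blast
    obtain s2 where s2: "(\<lambda>j. innG w (jG (g j)) * innG (C2 (jG (g j))) w) sums complex_of_real s2"
      "A2 * (hnorm innG w)\<^sup>2 \<le> s2" "s2 \<le> B2 * (hnorm innG w)\<^sup>2"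
      using frame2 by blast
    have series: "dsums (\<lambda>i j. innd (tens v w) (q (tHK (f i) (g j))) *
        innd (CT (q (tHK (f i) (g j)))) (tens v w)) (complex_of_real (s1 * s2))"
      using dsums_mult[OF s1(1) s2(1)]
      by (simp add: q CT hilbert_tensor_inner[OF tensor] mult_ac)
    have norm: "(hnorm innd (tens v w))\<^sup>2 = (hnorm innF v)\<^sup>2 * (hnorm innG w)\<^sup>2"
      by (simp add: hnorm_hilbert_tensor[OF tensor] power_mult_distrib)
    have nonneg: "0 \<le> A1 * (hnorm innF v)\<^sup>2" "0 \<le> A2 * (hnorm innG w)\<^sup>2"
      using A1 A2 by simp_all
    have "A1 * A2 * (hnorm innd (tens v w))\<^sup>2 \<le> s1 * s2"
        "s1 * s2 \<le> B1 * B2 * (hnorm innd (tens v w))\<^sup>2"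
      unfolding norm by (rule mult_mono_bounds[OF nonneg(1) s1(2,3) nonneg(2) s2(2,3)])+
    with series show ?thesis by blast
  qed
  moreover have "0 < A1 * A2" "A1 * A2 \<le> B1 * B2"
    using A1 A2 by (simp_all add: mult_mono)
  ultimately show ?thesis
    unfolding tensor_controlled_frame_def by blast
qed

lemma reconstruction_tensor:
  assumes tensor: "hilbert_tensor sch innF sck innG scd innd tens"
    and q: "\<forall>x y. q (tHK x y) = tens (jF x) (jG y)"
    and CT: "\<forall>x y. CT (tens x y) = tens (C1 x) (C2 y)"
    and recon1: "\<forall>v. hsums innF (\<lambda>i. sch (innF v (jF (e i))) (C1 (jF (f i)))) v"
    and recon2: "\<forall>w. hsums innG (\<lambda>j. sck (innG w (jG (h j))) (C2 (jG (g j)))) w"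
  shows "hdsums innd (\<lambda>i j. scd (innd (tens v w) (q (tHK (e i) (h j))))
           (CT (q (tHK (f i) (g j))))) (tens v w)"
proof -
  define x where "x i = sch (innF v (jF (e i))) (C1 (jF (f i)))" for i
  define y where "y j = sck (innG w (jG (h j))) (C2 (jG (g j)))" for j
  have factor: "(\<lambda>i j. scd (innd (tens v w) (q (tHK (e i) (h j)))) (CT (q (tHK (f i) (g j)))))
      = (\<lambda>i j. tens (x i) (y j))"
    by (simp add: q CT x_def y_def hilbert_tensor_inner[OF tensor] hilbert_tensor_scale[OF tensor])
  have "hsums innd (\<lambda>j. tens (x i) (y j)) (tens (x i) w)" for i
    unfolding y_def by (rule hsums_hilbert_tensor_right[OF tensor]) (use recon2 in blast)
  moreover have "hsums innd (\<lambda>i. tens (x i) w) (tens v w)"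
    unfolding x_def by (rule hsums_hilbert_tensor_left[OF tensor]) (use recon1 in blast)
  ultimately show ?thesis
    unfolding factor hdsums_def by (intro exI[of _ "\<lambda>i. tens (x i) w"] conjI allI)
qed

lemma dual_controlled_frames_tensor:
  assumes tensor: "hilbert_tensor sch innF sck innG scd innd tens"
    and q: "\<forall>x y. q (tHK x y) = tens (jF x) (jG y)"
    and CT: "\<forall>x y. CT (tens x y) = tens (C1 x) (C2 y)"
    and dual1: "dual_controlled_frames sch innF jF C1 f e"
    and dual2: "dual_controlled_frames sck innG jG C2 g h"
  shows "tensor_dual_controlled_frames scd innd tens q CT
           (\<lambda>i j. tHK (f i) (g j)) (\<lambda>i j. tHK (e i) (h j))"
proof -
  have frames: "controlled_frame innF jF C1 f" "controlled_frame innF jF C1 e"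
      "controlled_frame innG jG C2 g" "controlled_frame innG jG C2 h"
    and recon1: "\<forall>v. hsums innF (\<lambda>i. sch (innF v (jF (e i))) (C1 (jF (f i)))) v"
    and recon2: "\<forall>w. hsums innG (\<lambda>j. sck (innG w (jG (h j))) (C2 (jG (g j)))) w"
    using dual1 dual2 unfolding dual_controlled_frames_def by blast+
  show ?thesis
    unfolding tensor_dual_controlled_frames_def
    using controlled_frame_tensor[where q = q and tHK = tHK, OF tensor q CT frames(1,3)]
      controlled_frame_tensor[where q = q and tHK = tHK, OF tensor q CT frames(2,4)]
      reconstruction_tensor[where q = q and tHK = tHK, OF tensor q CT recon1 recon2]
    by blast
qed

text \<open>Only the Hilbert tensor structure and the factorwise action of \<open>q\<close> and \<open>C\<^sub>1 \<otimes> C\<^sub>2\<close> on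
  elementary tensors are needed; the remaining hypotheses merely describe the setting.\<close>

theorem theorem4p11:
  fixes n :: nat
    and sa :: "complex \<Rightarrow> 'a::ab_group_add \<Rightarrow> 'a" and ip1 :: "'a \<Rightarrow> 'a \<Rightarrow> 'a list \<Rightarrow> complex"
    and sb :: "complex \<Rightarrow> 'b::ab_group_add \<Rightarrow> 'b" and ip2 :: "'b \<Rightarrow> 'b \<Rightarrow> 'b list \<Rightarrow> complex"
    and as :: "'a list" and bs :: "'b list"
    and sch :: "complex \<Rightarrow> 'h::ab_group_add \<Rightarrow> 'h" and innF :: "'h \<Rightarrow> 'h \<Rightarrow> complex" and jF :: "'a \<Rightarrow> 'h"
    and sck :: "complex \<Rightarrow> 'k::ab_group_add \<Rightarrow> 'k" and innG :: "'k \<Rightarrow> 'k \<Rightarrow> complex" and jG :: "'b \<Rightarrow> 'k"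
    and scd :: "complex \<Rightarrow> 'd::ab_group_add \<Rightarrow> 'd" and innd :: "'d \<Rightarrow> 'd \<Rightarrow> complex"
    and tens :: "'h \<Rightarrow> 'k \<Rightarrow> 'd"
    and sc :: "complex \<Rightarrow> 'c::ab_group_add \<Rightarrow> 'c" and tHK :: "'a \<Rightarrow> 'b \<Rightarrow> 'c" and q :: "'c \<Rightarrow> 'd"
    and C1 :: "'h \<Rightarrow> 'h" and C2 :: "'k \<Rightarrow> 'k" and CT :: "'d \<Rightarrow> 'd"
    and f e :: "nat \<Rightarrow> 'a" and g h :: "nat \<Rightarrow> 'b"
  assumes "n \<ge> 2"
    and "n_hilbert sa n ip1" and "n_hilbert sb n ip2"
    and "length as = n - 1" and "length bs = n - 1"
    and "is_HF sa ip1 as sch innF jF" and "is_HF sb ip2 bs sck innG jG"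
    and "GB sch innF C1" and "GB sck innG C2"
    and "hilbert_tensor sch innF sck innG scd innd tens"
    and "alg_tensor sa sb sc tHK"
    and "Vector_Spaces.linear sc scd q" and "\<forall>x y. q (tHK x y) = tens (jF x) (jG y)"
    and "bounded_op scd innd CT" and "\<forall>x y. CT (tens x y) = tens (C1 x) (C2 y)"
    and "dual_controlled_frames sch innF jF C1 f e"
    and "dual_controlled_frames sck innG jG C2 g h"
  shows "tensor_dual_controlled_frames scd innd tens q CT
           (\<lambda>i j. tHK (f i) (g j)) (\<lambda>i j. tHK (e i) (h j))"
  using assms(10,13,15,16,17) by (rule dual_controlled_frames_tensor)

end
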